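(* Let $\omega\in\mathbb{C}_*^d$ and let $u:k\mapsto\omega^kh(k)$ be a nonzero vectorial $pg$-sequence, where $h=(h_1,\dots,h_r)\in\mathbb{C}[z]\otimes\mathbb{C}^r$ and $h_i$ has multi-degree $\delta(i)\in\mathbb{Z}^d_+$. Let $A_0$ be the (unclosed) linear span of the $\mathbb{Z}^d$-translates of $u$. If $|\delta(i)|\ge2$ for some $i$, then there exists a nonzero vectorial $pg$-sequence $w:k\mapsto\omega^kg(k)$ in $A_0$ with $g\in\mathbb{C}[z]\otimes\mathbb{C}^r$ a nonconstant vector-valued polynomial of total degree at most one in each coordinate (i.e. a nonconstant linear vector-valued polynomial).
   Context: $\mathbb{C}[z]=\mathbb{C}[z_1,\dots,z_d]$, $\mathbb{C}_*^d=(\mathbb{C}\setminus\{0\})^d$, $\omega^k=\prod_i\omega_i^{k_i}$. The multi-degree of a nonzero polynomial is the exponent $\delta\in\mathbb{Z}^d_+$ of its leading monomial $z^\delta$ with respect to the lexicographic order on $\mathbb{Z}^d_+$, and $|\delta|=\delta_1+\dots+\delta_d$. The $\mathbb{Z}^d$-translates of $u$ are the functions $k\mapsto u(k-j)$, $j\in\mathbb{Z}^d$. *)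

theory Defs
  imports Complex_Main "HOL-Library.Poly_Mapping"
begin

text \<open>Polynomials in variables z_0, z_1, ... with complex coefficients:
  a monomial is a finitely supported exponent vector (a poly_mapping from nat to nat),
  a polynomial is a finitely supported coefficient map on monomials.\<close>
type_synonym mpoly = "(nat \<Rightarrow>\<^sub>0 nat) \<Rightarrow>\<^sub>0 complex"

definition Zd :: "nat \<Rightarrow> (nat \<Rightarrow> int) set" where
  "Zd d = {k. \<forall>i\<ge>d. k i = 0}"

definition mpoly_vars_in :: "nat \<Rightarrow> mpoly \<Rightarrow> bool" where
  "mpoly_vars_in d p \<longleftrightarrow> (\<forall>\<alpha>::nat \<Rightarrow>\<^sub>0 nat. \<alpha> \<in> Poly_Mapping.keys p \<longrightarrow> Poly_Mapping.keys \<alpha> \<subseteq> {..<d})"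

definition peval :: "mpoly \<Rightarrow> (nat \<Rightarrow> int) \<Rightarrow> complex" where
  "peval p k = (\<Sum>\<alpha>\<in>Poly_Mapping.keys p. Poly_Mapping.lookup p \<alpha> * (\<Prod>i\<in>Poly_Mapping.keys \<alpha>. (of_int (k i)) ^ Poly_Mapping.lookup \<alpha> i))"

definition gpow :: "nat \<Rightarrow> (nat \<Rightarrow> complex) \<Rightarrow> (nat \<Rightarrow> int) \<Rightarrow> complex" where
  "gpow d \<omega> k = (\<Prod>i<d. \<omega> i powi k i)"

definition tdeg :: "(nat \<Rightarrow>\<^sub>0 nat) \<Rightarrow> nat" where
  "tdeg \<alpha> = (\<Sum>i\<in>Poly_Mapping.keys \<alpha>. Poly_Mapping.lookup \<alpha> i)"

definition lex_less :: "(nat \<Rightarrow>\<^sub>0 nat) \<Rightarrow> (nat \<Rightarrow>\<^sub>0 nat) \<Rightarrow> bool" where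
  "lex_less \<alpha> \<beta> \<longleftrightarrow> (\<exists>i. (\<forall>j<i. Poly_Mapping.lookup \<alpha> j = Poly_Mapping.lookup \<beta> j) \<and> Poly_Mapping.lookup \<alpha> i < Poly_Mapping.lookup \<beta> i)"

definition multideg :: "mpoly \<Rightarrow> (nat \<Rightarrow>\<^sub>0 nat)" where
  "multideg p = (THE \<alpha>. \<alpha> \<in> Poly_Mapping.keys p \<and> (\<forall>\<beta>\<in>Poly_Mapping.keys p. \<beta> \<noteq> \<alpha> \<longrightarrow> lex_less \<beta> \<alpha>))"

definition pg_seq :: "nat \<Rightarrow> nat \<Rightarrow> (nat \<Rightarrow> complex) \<Rightarrow> (nat \<Rightarrow> mpoly)
    \<Rightarrow> (nat \<Rightarrow> int) \<Rightarrow> nat \<Rightarrow> complex" where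
  "pg_seq d r \<omega> h k i = (if i < r then gpow d \<omega> k * peval (h i) k else 0)"

definition translate_span :: "nat \<Rightarrow> nat \<Rightarrow> ((nat \<Rightarrow> int) \<Rightarrow> nat \<Rightarrow> complex)
    \<Rightarrow> ((nat \<Rightarrow> int) \<Rightarrow> nat \<Rightarrow> complex) set" where
  "translate_span d r u = {w. \<exists>J c. finite J \<and> J \<subseteq> Zd d \<and>
      (\<forall>k\<in>Zd d. \<forall>i<r. w k i = (\<Sum>j\<in>J. c j * u (\<lambda>l. k l - j l) i))}"

end

(*
  Degree is measured by finite differences: F : Z^d -> C has difference degree at most n + 1
  if every backward difference F(k) - F(k - e_l) has difference degree at most n, and
  difference degree 0 means constant. Evaluations of polynomials have finite difference
  degree, and a polynomial vanishing on Z^d is zero (Kronecker substitution reduces this to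
  one variable), so the polynomial part of u is nonconstant on Z^d. For sequences
  k |-> \<omega>^k F(k), the combination u - \<omega>_l u(. - e_l) of two translates is
  k |-> \<omega>^k (F(k) - F(k - e_l)). Differencing in a direction in which F is not yet affine
  lowers the difference degree but keeps F nonconstant; after finitely many steps the
  translate span contains k |-> \<omega>^k G(k) with G nonconstant of difference degree one, i.e.
  affine on Z^d, which is the evaluation of a nonconstant linear polynomial.
*)

theory Submission
  imports Defs "HOL-Computational_Algebra.Polynomial"
begin

lemma lex_less_irrefl: "\<not> lex_less \<alpha> \<alpha>"
  by (auto simp: lex_less_def)

lemma lex_less_trans:
  assumes "lex_less \<alpha> \<beta>" and "lex_less \<beta> \<gamma>"
  shows "lex_less \<alpha> \<gamma>"
proof -
  obtain i j where
    i: "\<forall>m<i. Poly_Mapping.lookup \<alpha> m = Poly_Mapping.lookup \<beta> m"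
       "Poly_Mapping.lookup \<alpha> i < Poly_Mapping.lookup \<beta> i" and
    j: "\<forall>m<j. Poly_Mapping.lookup \<beta> m = Poly_Mapping.lookup \<gamma> m"
       "Poly_Mapping.lookup \<beta> j < Poly_Mapping.lookup \<gamma> j"
    using assms unfolding lex_less_def by blast
  have "(\<forall>m<min i j. Poly_Mapping.lookup \<alpha> m = Poly_Mapping.lookup \<gamma> m)
      \<and> Poly_Mapping.lookup \<alpha> (min i j) < Poly_Mapping.lookup \<gamma> (min i j)"
    using i j by (cases i j rule: linorder_cases) auto
  then show ?thesis
    unfolding lex_less_def by blast
qed

lemma lex_less_linear:
  assumes "\<alpha> \<noteq> \<beta>"
  shows "lex_less \<alpha> \<beta> \<or> lex_less \<beta> \<alpha>"
proof -
  have ex: "\<exists>i. Poly_Mapping.lookup \<alpha> i \<noteq> Poly_Mapping.lookup \<beta> i"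
    using assms by (metis poly_mapping_eqI)
  define i where "i = (LEAST i. Poly_Mapping.lookup \<alpha> i \<noteq> Poly_Mapping.lookup \<beta> i)"
  have "Poly_Mapping.lookup \<alpha> i \<noteq> Poly_Mapping.lookup \<beta> i"
    unfolding i_def using ex by (rule LeastI_ex)
  moreover have "\<forall>m<i. Poly_Mapping.lookup \<alpha> m = Poly_Mapping.lookup \<beta> m"
    unfolding i_def using not_less_Least by blast
  ultimately show ?thesis
    unfolding lex_less_def by (metis linorder_neqE_nat)
qed

lemma lex_maximum_exists:
  assumes "finite S" and "S \<noteq> {}"
  shows "\<exists>\<alpha>\<in>S. \<forall>\<beta>\<in>S. \<beta> \<noteq> \<alpha> \<longrightarrow> lex_less \<beta> \<alpha>"
  using assms
proof (induction S rule: finite_ne_induct)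
  case (insert \<gamma> S)
  then obtain \<alpha> where \<alpha>: "\<alpha> \<in> S" "\<forall>\<beta>\<in>S. \<beta> \<noteq> \<alpha> \<longrightarrow> lex_less \<beta> \<alpha>"
    by blast
  show ?case
  proof (cases "lex_less \<alpha> \<gamma>")
    case True
    have "lex_less \<beta> \<gamma>" if "\<beta> \<in> S" for \<beta>
      using \<alpha> True lex_less_trans that by (cases "\<beta> = \<alpha>") auto
    then show ?thesis
      by (intro bexI[of _ \<gamma>]) auto
  next
    case False
    have "\<gamma> \<noteq> \<alpha>"
      using \<alpha>(1) insert.hyps by auto
    then have "lex_less \<gamma> \<alpha>"
      using lex_less_linear False by auto
    then show ?thesis
      using \<alpha> \<open>\<gamma> \<noteq> \<alpha>\<close> by (intro bexI[of _ \<alpha>]) auto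
  qed
qed simp

lemma multideg_in_keys:
  assumes "p \<noteq> 0"
  shows "multideg p \<in> Poly_Mapping.keys p"
proof -
  let ?max = "\<lambda>\<alpha>. \<alpha> \<in> Poly_Mapping.keys p \<and>
    (\<forall>\<beta>\<in>Poly_Mapping.keys p. \<beta> \<noteq> \<alpha> \<longrightarrow> lex_less \<beta> \<alpha>)"
  obtain \<alpha> where "?max \<alpha>"
    using lex_maximum_exists[of "Poly_Mapping.keys p"] assms by auto
  moreover have "\<beta> = \<alpha>" if "?max \<beta>" for \<beta>
    using \<open>?max \<alpha>\<close> that lex_less_trans lex_less_irrefl by metis
  ultimately have "?max (multideg p)"
    unfolding multideg_def by (rule theI)
  then show ?thesis
    by blast
qed

definition monom_eval :: "(nat \<Rightarrow>\<^sub>0 nat) \<Rightarrow> (nat \<Rightarrow> int) \<Rightarrow> complex" where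
  "monom_eval \<alpha> k = (\<Prod>i\<in>Poly_Mapping.keys \<alpha>. of_int (k i) ^ Poly_Mapping.lookup \<alpha> i)"

lemma monom_eval_0 [simp]: "monom_eval 0 k = 1"
  by (simp add: monom_eval_def)

lemma monom_eval_single [simp]: "monom_eval (Poly_Mapping.single l n) k = of_int (k l) ^ n"
  by (cases "n = 0") (simp_all add: monom_eval_def)

lemma peval_eq_sum_superset:
  assumes "finite S" and "Poly_Mapping.keys p \<subseteq> S"
  shows "peval p k = (\<Sum>\<alpha>\<in>S. Poly_Mapping.lookup p \<alpha> * monom_eval \<alpha> k)"
  unfolding peval_def monom_eval_def
  by (rule sum.mono_neutral_left) (use assms in \<open>auto simp: in_keys_iff\<close>)

lemma peval_0 [simp]: "peval 0 k = 0"
  by (simp add: peval_def)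

lemma peval_add: "peval (p + q) k = peval p k + peval q k"
proof -
  let ?S = "Poly_Mapping.keys p \<union> Poly_Mapping.keys q"
  have "peval (p + q) k = (\<Sum>\<alpha>\<in>?S. Poly_Mapping.lookup (p + q) \<alpha> * monom_eval \<alpha> k)"
    by (intro peval_eq_sum_superset keys_add) simp
  also have "\<dots> = peval p k + peval q k"
    by (simp add: peval_eq_sum_superset[of ?S] lookup_add distrib_right sum.distrib)
  finally show ?thesis .
qed

lemma peval_diff: "peval (p - q) k = peval p k - peval q k"
  using peval_add[of "p - q" q k] by simp

lemma peval_sum: "peval (\<Sum>l\<in>A. f l) k = (\<Sum>l\<in>A. peval (f l) k)"
  by (induction A rule: infinite_finite_induct) (simp_all add: peval_add)

lemma peval_single: "peval (Poly_Mapping.single \<alpha> c) k = c * monom_eval \<alpha> k"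
  by (simp add: peval_eq_sum_superset[of "{\<alpha>}"])

lemma peval_const:
  assumes "Poly_Mapping.keys p \<subseteq> {0}"
  shows "peval p k = Poly_Mapping.lookup p 0"
  using peval_eq_sum_superset[of "{0}" p k] assms by simp

section \<open>Polynomials vanishing on the lattice\<close>

lemma base_expansion_less:
  fixes b :: "nat \<Rightarrow> nat"
  assumes "\<forall>i<n. b i < M"
  shows "(\<Sum>i<n. b i * M ^ i) < M ^ n"
  using assms
proof (induction n)
  case (Suc n)
  then have "(\<Sum>i<Suc n. b i * M ^ i) < (b n + 1) * M ^ n"
    by simp
  also have "\<dots> \<le> M * M ^ n"
    using Suc.prems by (intro mult_le_mono1) (simp add: Suc_le_eq)
  finally show ?case
    by simp
qed simp

lemma base_expansion_inj:
  fixes b c :: "nat \<Rightarrow> nat"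
  assumes "\<forall>i<n. b i < M" and "\<forall>i<n. c i < M"
    and "(\<Sum>i<n. b i * M ^ i) = (\<Sum>i<n. c i * M ^ i)"
  shows "\<forall>i<n. b i = c i"
  using assms
proof (induction n)
  case (Suc n)
  have top_digit: "(L + x * M ^ n) div M ^ n = x" if "L < M ^ n" for L x :: nat
  proof -
    have "M ^ n \<noteq> 0"
      using that by linarith
    then have "(L + x * M ^ n) div M ^ n = x + L div M ^ n"
      by (rule div_mult_self1)
    then show ?thesis
      using div_less[OF that] by simp
  qed
  have "(\<Sum>i<n. b i * M ^ i) < M ^ n" "(\<Sum>i<n. c i * M ^ i) < M ^ n"
    using Suc.prems base_expansion_less[of n] by simp_all
  note bounds = this
  have eq: "(\<Sum>i<n. b i * M ^ i) + b n * M ^ n = (\<Sum>i<n. c i * M ^ i) + c n * M ^ n"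
    using Suc.prems(3) by simp
  have "b n = c n"
    using top_digit[OF bounds(1), of "b n"] top_digit[OF bounds(2), of "c n"] eq by simp
  moreover have "\<forall>i<n. b i = c i"
    using Suc eq \<open>b n = c n\<close> by simp
  ultimately show ?case
    by (simp add: less_Suc_eq)
qed simp

definition kronecker_point :: "nat \<Rightarrow> nat \<Rightarrow> int \<Rightarrow> (nat \<Rightarrow> int)" where
  "kronecker_point d M t = (\<lambda>i. if i < d then t ^ (M ^ i) else 0)"

definition kronecker_exponent :: "nat \<Rightarrow> nat \<Rightarrow> (nat \<Rightarrow>\<^sub>0 nat) \<Rightarrow> nat" where
  "kronecker_exponent d M \<alpha> = (\<Sum>i<d. Poly_Mapping.lookup \<alpha> i * M ^ i)"

lemma kronecker_point_in_Zd: "kronecker_point d M t \<in> Zd d"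
  by (simp add: kronecker_point_def Zd_def)

lemma monom_eval_kronecker_point:
  assumes "Poly_Mapping.keys \<alpha> \<subseteq> {..<d}"
  shows "monom_eval \<alpha> (kronecker_point d M t) = of_int t ^ kronecker_exponent d M \<alpha>"
proof -
  have "monom_eval \<alpha> (kronecker_point d M t)
      = (\<Prod>i\<in>Poly_Mapping.keys \<alpha>. of_int t ^ (Poly_Mapping.lookup \<alpha> i * M ^ i))"
    unfolding monom_eval_def kronecker_point_def
    using assms by (intro prod.cong) (auto simp: power_mult[symmetric] mult.commute)
  also have "\<dots> = of_int t ^ (\<Sum>i\<in>Poly_Mapping.keys \<alpha>. Poly_Mapping.lookup \<alpha> i * M ^ i)"
    by (simp add: power_sum)
  also have "(\<Sum>i\<in>Poly_Mapping.keys \<alpha>. Poly_Mapping.lookup \<alpha> i * M ^ i) = kronecker_exponent d M \<alpha>"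
    unfolding kronecker_exponent_def
    using assms by (intro sum.mono_neutral_left) (auto simp: in_keys_iff)
  finally show ?thesis .
qed

lemma kronecker_exponent_inj:
  assumes "Poly_Mapping.keys \<alpha> \<subseteq> {..<d}" "Poly_Mapping.keys \<beta> \<subseteq> {..<d}"
    and "\<forall>i. Poly_Mapping.lookup \<alpha> i < M" "\<forall>i. Poly_Mapping.lookup \<beta> i < M"
    and "kronecker_exponent d M \<alpha> = kronecker_exponent d M \<beta>"
  shows "\<alpha> = \<beta>"
proof (rule poly_mapping_eqI)
  fix i
  show "Poly_Mapping.lookup \<alpha> i = Poly_Mapping.lookup \<beta> i"
  proof (cases "i < d")
    case True
    then show ?thesis
      using base_expansion_inj[of d "Poly_Mapping.lookup \<alpha>" M "Poly_Mapping.lookup \<beta>"] assms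
      unfolding kronecker_exponent_def by blast
  next
    case False
    then have "i \<notin> Poly_Mapping.keys \<alpha>" "i \<notin> Poly_Mapping.keys \<beta>"
      using assms(1,2) by auto
    then show ?thesis
      by (simp add: in_keys_iff)
  qed
qed

lemma poly_eq_0_if_vanishes_on_integers:
  fixes P :: "'a::{idom,ring_char_0} poly"
  assumes "\<And>t. poly P (of_int t) = 0"
  shows "P = 0"
proof (rule ccontr)
  assume "P \<noteq> 0"
  have "range (of_int :: int \<Rightarrow> 'a) \<subseteq> {x. poly P x = 0}"
    using assms by auto
  then have "finite (range (of_int :: int \<Rightarrow> 'a))"
    using poly_roots_finite[OF \<open>P \<noteq> 0\<close>] by (rule finite_subset)
  moreover have "inj (of_int :: int \<Rightarrow> 'a)"
    by (simp add: inj_def)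
  ultimately have "finite (UNIV :: int set)"
    by (rule finite_imageD)
  then show False
    by simp
qed

text \<open>Kronecker substitution \<open>z\<^sub>i = t ^ M ^ i\<close>: when \<open>M\<close> exceeds every exponent, distinct
  monomials of \<open>p\<close> go to distinct powers of \<open>t\<close>.\<close>
definition kronecker_poly :: "nat \<Rightarrow> nat \<Rightarrow> mpoly \<Rightarrow> complex poly" where
  "kronecker_poly d M p =
    (\<Sum>\<beta>\<in>Poly_Mapping.keys p. monom (Poly_Mapping.lookup p \<beta>) (kronecker_exponent d M \<beta>))"

lemma poly_kronecker_poly:
  assumes "mpoly_vars_in d p"
  shows "poly (kronecker_poly d M p) (of_int t) = peval p (kronecker_point d M t)"
  using assms unfolding kronecker_poly_def poly_sum poly_monom mpoly_vars_in_def
  by (simp add: peval_eq_sum_superset[OF finite_keys order_refl] monom_eval_kronecker_point)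

lemma coeff_kronecker_poly:
  assumes "mpoly_vars_in d p" and "\<forall>\<beta>\<in>Poly_Mapping.keys p. \<forall>i. Poly_Mapping.lookup \<beta> i < M"
    and "\<alpha> \<in> Poly_Mapping.keys p"
  shows "coeff (kronecker_poly d M p) (kronecker_exponent d M \<alpha>) = Poly_Mapping.lookup p \<alpha>"
proof -
  have "kronecker_exponent d M \<beta> = kronecker_exponent d M \<alpha> \<longleftrightarrow> \<beta> = \<alpha>"
    if "\<beta> \<in> Poly_Mapping.keys p" for \<beta>
    using assms that kronecker_exponent_inj[of \<beta> d \<alpha> M] unfolding mpoly_vars_in_def by blast
  then have "coeff (kronecker_poly d M p) (kronecker_exponent d M \<alpha>)
      = (\<Sum>\<beta>\<in>Poly_Mapping.keys p. if \<beta> = \<alpha> then Poly_Mapping.lookup p \<beta> else 0)"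
    unfolding kronecker_poly_def coeff_sum by (intro sum.cong) (simp_all add: coeff_monom)
  also have "\<dots> = Poly_Mapping.lookup p \<alpha>"
    using assms(3) by simp
  finally show ?thesis .
qed

lemma lookup_less_Suc_sum_tdeg:
  assumes "\<alpha> \<in> Poly_Mapping.keys p"
  shows "Poly_Mapping.lookup \<alpha> i < Suc (\<Sum>\<beta>\<in>Poly_Mapping.keys p. tdeg \<beta>)"
proof -
  have "Poly_Mapping.lookup \<alpha> i \<le> tdeg \<alpha>"
    unfolding tdeg_def by (cases "i \<in> Poly_Mapping.keys \<alpha>") (auto simp: in_keys_iff intro: member_le_sum)
  also have "\<dots> \<le> (\<Sum>\<beta>\<in>Poly_Mapping.keys p. tdeg \<beta>)"
    using assms by (intro member_le_sum) simp_all
  finally show ?thesis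
    by simp
qed

lemma mpoly_eq_0_if_peval_eq_0:
  assumes vars: "mpoly_vars_in d p" and zero: "\<forall>k\<in>Zd d. peval p k = 0"
  shows "p = 0"
proof -
  define M where "M = Suc (\<Sum>\<beta>\<in>Poly_Mapping.keys p. tdeg \<beta>)"
  have P_eq_0: "kronecker_poly d M p = 0"
    using zero kronecker_point_in_Zd
    by (intro poly_eq_0_if_vanishes_on_integers) (simp add: poly_kronecker_poly[OF vars])
  have digits: "\<forall>\<beta>\<in>Poly_Mapping.keys p. \<forall>i. Poly_Mapping.lookup \<beta> i < M"
    unfolding M_def using lookup_less_Suc_sum_tdeg by blast
  have "Poly_Mapping.lookup p \<alpha> = 0" if "\<alpha> \<in> Poly_Mapping.keys p" for \<alpha>
    using coeff_kronecker_poly[OF vars digits that] P_eq_0 by simp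
  then show ?thesis
    by (metis in_keys_iff keys_eq_empty ex_in_conv)
qed

section \<open>Difference degree\<close>

definition unit_vec :: "nat \<Rightarrow> nat \<Rightarrow> int" where
  "unit_vec l = (\<lambda>i. if i = l then 1 else 0)"

definition step_back :: "nat \<Rightarrow> (nat \<Rightarrow> int) \<Rightarrow> (nat \<Rightarrow> int)" where
  "step_back l k = k(l := k l - 1)"

definition bdiff :: "nat \<Rightarrow> ((nat \<Rightarrow> int) \<Rightarrow> 'a::ab_group_add) \<Rightarrow> (nat \<Rightarrow> int) \<Rightarrow> 'a" where
  "bdiff l f = (\<lambda>k. f k - f (step_back l k))"

text \<open>Never hand a fact \<open>diff_deg_le d 0 f\<close> or \<open>diff_deg_le d 1 f\<close> to the simplifier: they
  unfold to equations \<open>f k = f k'\<close> between arbitrary points, which rewrite forever.\<close>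
fun diff_deg_le :: "nat \<Rightarrow> nat \<Rightarrow> ((nat \<Rightarrow> int) \<Rightarrow> 'a::ab_group_add) \<Rightarrow> bool" where
  "diff_deg_le d 0 f \<longleftrightarrow> (\<forall>k\<in>Zd d. \<forall>k'\<in>Zd d. f k = f k')"
| "diff_deg_le d (Suc n) f \<longleftrightarrow> (\<forall>l<d. diff_deg_le d n (bdiff l f))"

lemma zero_in_Zd: "(\<lambda>i. 0) \<in> Zd d"
  by (simp add: Zd_def)

lemma unit_vec_in_Zd: "l < d \<Longrightarrow> unit_vec l \<in> Zd d"
  by (simp add: unit_vec_def Zd_def)

lemma step_back_in_Zd: "k \<in> Zd d \<Longrightarrow> l < d \<Longrightarrow> step_back l k \<in> Zd d"
  by (simp add: step_back_def Zd_def)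

lemma fun_upd_in_Zd: "k \<in> Zd d \<Longrightarrow> l < d \<Longrightarrow> k(l := t) \<in> Zd d"
  by (simp add: Zd_def)

lemma step_back_commute: "step_back l (step_back m k) = step_back m (step_back l k)"
  by (auto simp: step_back_def)

lemma diff_deg_le_0_imp_const: "diff_deg_le d 0 f \<Longrightarrow> k \<in> Zd d \<Longrightarrow> f k = f (\<lambda>i. 0)"
  using zero_in_Zd unfolding diff_deg_le.simps by blast

lemma diff_deg_le_cong:
  "(\<And>k. k \<in> Zd d \<Longrightarrow> f k = g k) \<Longrightarrow> diff_deg_le d n f \<Longrightarrow> diff_deg_le d n g"
proof (induction n arbitrary: f g)
  case (Suc n)
  have "diff_deg_le d n (bdiff l g)" if "l < d" for l
    using Suc.IH[of "bdiff l f" "bdiff l g"] Suc.prems that step_back_in_Zd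
    by (simp add: bdiff_def)
  then show ?case
    by simp
next
  case 0
  then show ?case
    unfolding diff_deg_le.simps by metis
qed

lemma diff_deg_le_const: "diff_deg_le d n (\<lambda>k. c)"
  by (induction n arbitrary: c) (simp_all add: bdiff_def)

lemma diff_deg_le_add:
  "diff_deg_le d n f \<Longrightarrow> diff_deg_le d n g \<Longrightarrow> diff_deg_le d n (\<lambda>k. f k + g k)"
proof (induction n arbitrary: f g)
  case (Suc n)
  have "bdiff l (\<lambda>k. f k + g k) = (\<lambda>k. bdiff l f k + bdiff l g k)" for l
    by (simp add: bdiff_def fun_eq_iff)
  with Suc show ?case
    by simp
next
  case 0
  then show ?case
    unfolding diff_deg_le.simps by metis
qed

lemma diff_deg_le_sum:
  "(\<And>i. i \<in> S \<Longrightarrow> diff_deg_le d n (F i)) \<Longrightarrow> diff_deg_le d n (\<lambda>k. \<Sum>i\<in>S. F i k)"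
  by (induction S rule: infinite_finite_induct) (simp_all add: diff_deg_le_const diff_deg_le_add)

lemma diff_deg_le_mult_left:
  fixes f :: "(nat \<Rightarrow> int) \<Rightarrow> 'a::ring"
  shows "diff_deg_le d n f \<Longrightarrow> diff_deg_le d n (\<lambda>k. c * f k)"
proof (induction n arbitrary: f)
  case (Suc n)
  have "bdiff l (\<lambda>k. c * f k) = (\<lambda>k. c * bdiff l f k)" for l
    by (simp add: bdiff_def fun_eq_iff right_diff_distrib)
  with Suc show ?case
    by simp
next
  case 0
  then show ?case
    unfolding diff_deg_le.simps by metis
qed

lemma diff_deg_le_Suc: "diff_deg_le d n f \<Longrightarrow> diff_deg_le d (Suc n) f"
proof (induction n arbitrary: f)
  case 0
  have "f k = f (step_back l k)" if "l < d" "k \<in> Zd d" for l k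
    using 0 that step_back_in_Zd unfolding diff_deg_le.simps by blast
  then have "bdiff l f k = 0" if "l < d" "k \<in> Zd d" for l k
    using that by (simp add: bdiff_def)
  then show ?case
    by simp
qed simp

lemma diff_deg_le_mono: "n \<le> m \<Longrightarrow> diff_deg_le d n f \<Longrightarrow> diff_deg_le d m f"
  by (induction m rule: dec_induct) (blast intro: diff_deg_le_Suc)+

lemma diff_deg_le_step_back:
  "l < d \<Longrightarrow> diff_deg_le d n f \<Longrightarrow> diff_deg_le d n (\<lambda>k. f (step_back l k))"
proof (induction n arbitrary: f)
  case 0
  then show ?case
    using step_back_in_Zd unfolding diff_deg_le.simps by blast
next
  case (Suc n)
  have "bdiff m (\<lambda>k. f (step_back l k)) = (\<lambda>k. bdiff m f (step_back l k))" for m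
    by (simp add: bdiff_def step_back_commute)
  with Suc show ?case
    by simp
qed

lemma diff_deg_le_0_mult:
  fixes f g :: "(nat \<Rightarrow> int) \<Rightarrow> 'a::ring"
  assumes "diff_deg_le d 0 f" and "diff_deg_le d n g"
  shows "diff_deg_le d n (\<lambda>k. f k * g k)"
proof -
  have "diff_deg_le d n (\<lambda>k. f (\<lambda>i. 0) * g k)"
    using assms(2) by (rule diff_deg_le_mult_left)
  moreover have "f (\<lambda>i. 0) * g k = f k * g k" if "k \<in> Zd d" for k
    using diff_deg_le_0_imp_const[OF assms(1) that] by simp
  ultimately show ?thesis
    by (rule diff_deg_le_cong[rotated])
qed

lemma bdiff_mult:
  fixes f g :: "(nat \<Rightarrow> int) \<Rightarrow> 'a::ring"
  shows "bdiff l (\<lambda>k. f k * g k) = (\<lambda>k. bdiff l f k * g k + f (step_back l k) * bdiff l g k)"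
  by (simp add: bdiff_def fun_eq_iff algebra_simps)

lemma diff_deg_le_mult:
  fixes f g :: "(nat \<Rightarrow> int) \<Rightarrow> 'a::comm_ring"
  shows "diff_deg_le d m f \<Longrightarrow> diff_deg_le d n g \<Longrightarrow> diff_deg_le d (m + n) (\<lambda>k. f k * g k)"
proof (induction "m + n" arbitrary: m n f g rule: less_induct)
  case less
  consider "m = 0" | "n = 0" | m' n' where "m = Suc m'" "n = Suc n'"
    by (meson not0_implies_Suc)
  then show ?case
  proof cases
    case 1
    have "diff_deg_le d 0 f"
      using less.prems(1) unfolding 1 .
    from this less.prems(2) have "diff_deg_le d n (\<lambda>k. f k * g k)"
      by (rule diff_deg_le_0_mult)
    with 1 show ?thesis
      by simp
  next
    case 2
    have "diff_deg_le d 0 g"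
      using less.prems(2) unfolding 2 .
    from this less.prems(1) have "diff_deg_le d m (\<lambda>k. g k * f k)"
      by (rule diff_deg_le_0_mult)
    with 2 show ?thesis
      by (simp add: mult.commute)
  next
    case 3
    have "diff_deg_le d (m' + n) (bdiff l (\<lambda>k. f k * g k))" if "l < d" for l
    proof -
      have "m' + n < m + n"
        using 3 by simp
      moreover have "diff_deg_le d m' (bdiff l f)"
        using less.prems(1) 3 that by simp
      ultimately have A: "diff_deg_le d (m' + n) (\<lambda>k. bdiff l f k * g k)"
        using less.prems(2) by (rule less.hyps)
      have "m + n' < m + n"
        using 3 by simp
      moreover have "diff_deg_le d m (\<lambda>k. f (step_back l k))"
        using that less.prems(1) by (rule diff_deg_le_step_back)
      moreover have "diff_deg_le d n' (bdiff l g)"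
        using less.prems(2) 3 that by simp
      ultimately have "diff_deg_le d (m + n') (\<lambda>k. f (step_back l k) * bdiff l g k)"
        by (rule less.hyps)
      moreover have "m + n' = m' + n"
        using 3 by simp
      ultimately show ?thesis
        unfolding bdiff_mult using A by (simp add: diff_deg_le_add)
    qed
    then show ?thesis
      using 3 by simp
  qed
qed

lemma diff_deg_le_coordinate: "diff_deg_le d 1 (\<lambda>k. of_int (k i) :: 'a::ring_1)"
proof -
  have "bdiff l (\<lambda>k. of_int (k i) :: 'a) = (\<lambda>k. if i = l then 1 else 0)" for l
    by (simp add: bdiff_def step_back_def fun_eq_iff)
  then show ?thesis
    by (simp add: diff_deg_le_const)
qed

lemma diff_deg_le_power:
  fixes f :: "(nat \<Rightarrow> int) \<Rightarrow> 'a::comm_ring_1"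
  shows "diff_deg_le d n f \<Longrightarrow> diff_deg_le d (n * e) (\<lambda>k. f k ^ e)"
proof (induction e)
  case 0
  then show ?case
    by (simp add: diff_deg_le_const)
next
  case (Suc e)
  then have "diff_deg_le d (n + n * e) (\<lambda>k. f k * f k ^ e)"
    by (intro diff_deg_le_mult)
  then show ?case
    by simp
qed

lemma diff_deg_le_prod:
  fixes F :: "'i \<Rightarrow> (nat \<Rightarrow> int) \<Rightarrow> 'a::comm_ring_1"
  shows "(\<And>i. i \<in> S \<Longrightarrow> diff_deg_le d (N i) (F i)) \<Longrightarrow>
    diff_deg_le d (\<Sum>i\<in>S. N i) (\<lambda>k. \<Prod>i\<in>S. F i k)"
proof (induction S rule: infinite_finite_induct)
  case (insert i S)
  then have "diff_deg_le d (N i + (\<Sum>i\<in>S. N i)) (\<lambda>k. F i k * (\<Prod>i\<in>S. F i k))"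
    by (intro diff_deg_le_mult) simp_all
  with insert.hyps show ?case
    by simp
qed (simp_all add: diff_deg_le_const)

lemma diff_deg_le_monom_eval: "diff_deg_le d (tdeg \<alpha>) (monom_eval \<alpha>)"
proof -
  have "diff_deg_le d (Poly_Mapping.lookup \<alpha> i) (\<lambda>k. of_int (k i) ^ Poly_Mapping.lookup \<alpha> i :: complex)"
    for i
    using diff_deg_le_power[OF diff_deg_le_coordinate, of d "Poly_Mapping.lookup \<alpha> i" i] by simp
  then have "diff_deg_le d (tdeg \<alpha>) (\<lambda>k. monom_eval \<alpha> k)"
    unfolding tdeg_def monom_eval_def by (rule diff_deg_le_prod)
  then show ?thesis
    by simp
qed

lemma diff_deg_le_peval: "diff_deg_le d (\<Sum>\<alpha>\<in>Poly_Mapping.keys p. tdeg \<alpha>) (peval p)"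
proof -
  have "diff_deg_le d (\<Sum>\<alpha>\<in>Poly_Mapping.keys p. tdeg \<alpha>)
      (\<lambda>k. Poly_Mapping.lookup p \<alpha> * monom_eval \<alpha> k)" if "\<alpha> \<in> Poly_Mapping.keys p" for \<alpha>
  proof (rule diff_deg_le_mono)
    show "tdeg \<alpha> \<le> (\<Sum>\<alpha>\<in>Poly_Mapping.keys p. tdeg \<alpha>)"
      using that by (intro member_le_sum) simp_all
    show "diff_deg_le d (tdeg \<alpha>) (\<lambda>k. Poly_Mapping.lookup p \<alpha> * monom_eval \<alpha> k)"
      by (rule diff_deg_le_mult_left[OF diff_deg_le_monom_eval])
  qed
  then have "diff_deg_le d (\<Sum>\<alpha>\<in>Poly_Mapping.keys p. tdeg \<alpha>)
      (\<lambda>k. \<Sum>\<alpha>\<in>Poly_Mapping.keys p. Poly_Mapping.lookup p \<alpha> * monom_eval \<alpha> k)"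
    by (rule diff_deg_le_sum)
  moreover have "(\<lambda>k. \<Sum>\<alpha>\<in>Poly_Mapping.keys p. Poly_Mapping.lookup p \<alpha> * monom_eval \<alpha> k) = peval p"
    using peval_eq_sum_superset[OF finite_keys order_refl, of p] by (simp add: fun_eq_iff)
  ultimately show ?thesis
    by simp
qed

section \<open>Affine functions and linear polynomials\<close>

lemma diff_deg_le_1_bdiff:
  fixes f :: "(nat \<Rightarrow> int) \<Rightarrow> 'a::ab_group_add"
  assumes "diff_deg_le d 1 f" and "l < d" and "k \<in> Zd d"
  shows "f k - f (step_back l k) = f (unit_vec l) - f (\<lambda>i. 0)"
proof -
  have "diff_deg_le d 0 (bdiff l f)"
    using assms(1,2) unfolding One_nat_def diff_deg_le.simps(2) by blast
  then have "bdiff l f k = bdiff l f (unit_vec l)"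
    using assms(3) unit_vec_in_Zd[OF assms(2)] unfolding diff_deg_le.simps by blast
  moreover have "step_back l (unit_vec l) = (\<lambda>i. 0)"
    by (simp add: step_back_def unit_vec_def fun_eq_iff)
  ultimately show ?thesis
    by (simp add: bdiff_def)
qed

lemma linear_if_constant_difference:
  fixes g :: "int \<Rightarrow> 'a::ring_1"
  assumes "\<And>t. g t - g (t - 1) = D"
  shows "g t = g 0 + of_int t * D"
proof (induction t rule: int_induct[where k = 0])
  case (step1 t)
  have "g (t + 1) = g t + D"
    using assms[of "t + 1"] by (simp add: diff_eq_eq)
  with step1.IH show ?case
    by (simp add: algebra_simps)
next
  case (step2 t)
  have "g (t - 1) = g t - D"
    using assms[of t] by (simp add: algebra_simps)
  with step2.IH show ?case
    by (simp add: algebra_simps)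
qed simp

lemma diff_deg_le_1_along_line:
  fixes f :: "(nat \<Rightarrow> int) \<Rightarrow> 'a::ring_1"
  assumes "diff_deg_le d 1 f" and "l < d" and "k \<in> Zd d"
  shows "f (k(l := t)) = f (k(l := 0)) + of_int t * (f (unit_vec l) - f (\<lambda>i. 0))"
proof (rule linear_if_constant_difference[where g = "\<lambda>t. f (k(l := t))"])
  fix t
  show "f (k(l := t)) - f (k(l := t - 1)) = f (unit_vec l) - f (\<lambda>i. 0)"
    using diff_deg_le_1_bdiff[OF assms(1,2) fun_upd_in_Zd[OF assms(3,2)], of t]
    by (simp add: step_back_def)
qed

lemma diff_deg_le_1_affine:
  fixes f :: "(nat \<Rightarrow> int) \<Rightarrow> 'a::ring_1"
  assumes f: "diff_deg_le d 1 f" and k: "k \<in> Zd d"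
  shows "f k = f (\<lambda>i. 0) + (\<Sum>l<d. of_int (k l) * (f (unit_vec l) - f (\<lambda>i. 0)))"
proof -
  define trunc where "trunc m = (\<lambda>i. if i < m then k i else 0)" for m
  have "f (trunc m) = f (\<lambda>i. 0) + (\<Sum>l<m. of_int (k l) * (f (unit_vec l) - f (\<lambda>i. 0)))"
    if "m \<le> d" for m
    using that
  proof (induction m)
    case 0
    then show ?case
      by (simp add: trunc_def)
  next
    case (Suc m)
    have "trunc m \<in> Zd d"
      using k by (simp add: trunc_def Zd_def)
    moreover have "trunc (Suc m) = (trunc m)(m := k m)" and "(trunc m)(m := 0) = trunc m"
      by (auto simp: trunc_def fun_eq_iff)
    ultimately have "f (trunc (Suc m)) = f (trunc m) + of_int (k m) * (f (unit_vec m) - f (\<lambda>i. 0))"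
      using diff_deg_le_1_along_line[OF f, of m "trunc m" "k m"] Suc.prems by simp
    with Suc show ?case
      by simp
  qed
  moreover have "trunc d = k"
    using k by (auto simp: trunc_def Zd_def fun_eq_iff)
  ultimately show ?thesis
    by blast
qed

definition affine_mpoly :: "nat \<Rightarrow> complex \<Rightarrow> (nat \<Rightarrow> complex) \<Rightarrow> mpoly" where
  "affine_mpoly d c a =
    Poly_Mapping.single 0 c + (\<Sum>l<d. Poly_Mapping.single (Poly_Mapping.single l 1) (a l))"

lemma in_keys_affine_mpoly:
  assumes "\<alpha> \<in> Poly_Mapping.keys (affine_mpoly d c a)"
  obtains "\<alpha> = 0" | l where "l < d" and "\<alpha> = Poly_Mapping.single l 1"
proof -
  have "\<alpha> \<in> Poly_Mapping.keys (Poly_Mapping.single 0 c) \<union>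
      Poly_Mapping.keys (\<Sum>l<d. Poly_Mapping.single (Poly_Mapping.single l (1::nat)) (a l))"
    using assms unfolding affine_mpoly_def by (rule subsetD[OF keys_add])
  moreover have "Poly_Mapping.keys (\<Sum>l<d. Poly_Mapping.single (Poly_Mapping.single l (1::nat)) (a l))
      \<subseteq> (\<Union>l<d. Poly_Mapping.keys (Poly_Mapping.single (Poly_Mapping.single l (1::nat)) (a l)))"
    by (rule keys_sum)
  moreover have "Poly_Mapping.keys (Poly_Mapping.single (Poly_Mapping.single l (1::nat)) (a l))
      \<subseteq> {Poly_Mapping.single l 1}" for l
    by simp
  moreover have "Poly_Mapping.keys (Poly_Mapping.single 0 c) \<subseteq> {0}"
    by simp
  ultimately show ?thesis
    using that by blast
qed

lemma affine_mpoly_vars_in: "mpoly_vars_in d (affine_mpoly d c a)"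
  unfolding mpoly_vars_in_def
proof (intro allI impI)
  fix \<alpha>
  assume "\<alpha> \<in> Poly_Mapping.keys (affine_mpoly d c a)"
  then show "Poly_Mapping.keys \<alpha> \<subseteq> {..<d}"
    by (rule in_keys_affine_mpoly) simp_all
qed

lemma tdeg_le_1_if_in_keys_affine_mpoly:
  "\<alpha> \<in> Poly_Mapping.keys (affine_mpoly d c a) \<Longrightarrow> tdeg \<alpha> \<le> 1"
  by (erule in_keys_affine_mpoly) (simp_all add: tdeg_def)

lemma peval_affine_mpoly: "peval (affine_mpoly d c a) k = c + (\<Sum>l<d. a l * of_int (k l))"
  by (simp add: affine_mpoly_def peval_add peval_sum peval_single)

definition affine_interpolant :: "nat \<Rightarrow> ((nat \<Rightarrow> int) \<Rightarrow> complex) \<Rightarrow> mpoly" where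
  "affine_interpolant d f = affine_mpoly d (f (\<lambda>i. 0)) (\<lambda>l. f (unit_vec l) - f (\<lambda>i. 0))"

lemma peval_affine_interpolant:
  assumes "diff_deg_le d 1 f" and "k \<in> Zd d"
  shows "peval (affine_interpolant d f) k = f k"
  unfolding affine_interpolant_def peval_affine_mpoly diff_deg_le_1_affine[OF assms]
  by (simp add: mult.commute)

lemma diff_deg_le_0_peval_iff:
  assumes "mpoly_vars_in d p"
  shows "diff_deg_le d 0 (peval p) \<longleftrightarrow> Poly_Mapping.keys p \<subseteq> {0}"
proof
  assume const: "diff_deg_le d 0 (peval p)"
  let ?c = "Poly_Mapping.single 0 (peval p (\<lambda>i. 0))"
  have "mpoly_vars_in d (p - ?c)"
    unfolding mpoly_vars_in_def
  proof (intro allI impI)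
    fix \<alpha>
    assume "\<alpha> \<in> Poly_Mapping.keys (p - ?c)"
    then have "\<alpha> \<in> Poly_Mapping.keys p \<or> \<alpha> = 0"
      using keys_diff[of p ?c] by (auto split: if_splits)
    then show "Poly_Mapping.keys \<alpha> \<subseteq> {..<d}"
      using assms unfolding mpoly_vars_in_def by auto
  qed
  moreover have "peval (p - ?c) k = 0" if "k \<in> Zd d" for k
  proof -
    have "peval p k = peval p (\<lambda>i. 0)"
      using const that by (rule diff_deg_le_0_imp_const)
    then show ?thesis
      by (simp add: peval_diff peval_single)
  qed
  ultimately have "p = ?c"
    using mpoly_eq_0_if_peval_eq_0 by fastforce
  then show "Poly_Mapping.keys p \<subseteq> {0}"
    by (metis keys_single empty_subsetI order_refl)
next
  assume "Poly_Mapping.keys p \<subseteq> {0}"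
  then show "diff_deg_le d 0 (peval p)"
    by (simp add: peval_const)
qed

lemma peval_nonconstant_if_multideg_neq_0:
  assumes "mpoly_vars_in d p" and "p \<noteq> 0" and "multideg p \<noteq> 0"
  shows "\<not> diff_deg_le d 0 (peval p)"
  using diff_deg_le_0_peval_iff[OF assms(1)] multideg_in_keys[OF assms(2)] assms(3) by blast

section \<open>The translate span\<close>

definition pg_seq_fun :: "nat \<Rightarrow> nat \<Rightarrow> (nat \<Rightarrow> complex) \<Rightarrow> (nat \<Rightarrow> (nat \<Rightarrow> int) \<Rightarrow> complex)
    \<Rightarrow> (nat \<Rightarrow> int) \<Rightarrow> nat \<Rightarrow> complex" where
  "pg_seq_fun d r \<omega> F k i = (if i < r then gpow d \<omega> k * F i k else 0)"

lemma pg_seq_eq_pg_seq_fun: "pg_seq d r \<omega> h = pg_seq_fun d r \<omega> (\<lambda>i. peval (h i))"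
  by (simp add: pg_seq_def pg_seq_fun_def fun_eq_iff)

lemma translate_span_cong:
  assumes "w \<in> translate_span d r u" and "\<And>k i. k \<in> Zd d \<Longrightarrow> i < r \<Longrightarrow> w' k i = w k i"
  shows "w' \<in> translate_span d r u"
  using assms unfolding translate_span_def by simp

lemma translate_span_self: "u \<in> translate_span d r u"
  unfolding translate_span_def
  by (intro CollectI exI[of _ "{\<lambda>i. 0}"] exI[of _ "\<lambda>j. 1"]) (simp add: zero_in_Zd)

lemma translate_span_diff:
  assumes "w1 \<in> translate_span d r u" and "w2 \<in> translate_span d r u"
  shows "(\<lambda>k i. w1 k i - a * w2 k i) \<in> translate_span d r u"
proof -
  obtain J1 c1 where J1: "finite J1" "J1 \<subseteq> Zd d"
    and w1: "\<And>k i. k \<in> Zd d \<Longrightarrow> i < r \<Longrightarrow> w1 k i = (\<Sum>j\<in>J1. c1 j * u (\<lambda>l. k l - j l) i)"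
    using assms(1) unfolding translate_span_def by blast
  obtain J2 c2 where J2: "finite J2" "J2 \<subseteq> Zd d"
    and w2: "\<And>k i. k \<in> Zd d \<Longrightarrow> i < r \<Longrightarrow> w2 k i = (\<Sum>j\<in>J2. c2 j * u (\<lambda>l. k l - j l) i)"
    using assms(2) unfolding translate_span_def by blast
  define c where "c j = (if j \<in> J1 then c1 j else 0) - a * (if j \<in> J2 then c2 j else 0)" for j
  have "w1 k i - a * w2 k i = (\<Sum>j\<in>J1 \<union> J2. c j * u (\<lambda>l. k l - j l) i)"
    if "k \<in> Zd d" and "i < r" for k i
  proof -
    let ?X = "\<lambda>j. u (\<lambda>l. k l - j l) i"
    have "c j * ?X j = (if j \<in> J1 then c1 j * ?X j else 0) - a * (if j \<in> J2 then c2 j * ?X j else 0)"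
      for j
      by (simp add: c_def left_diff_distrib mult.assoc)
    then have "(\<Sum>j\<in>J1 \<union> J2. c j * ?X j)
        = (\<Sum>j\<in>J1 \<union> J2. if j \<in> J1 then c1 j * ?X j else 0)
          - a * (\<Sum>j\<in>J1 \<union> J2. if j \<in> J2 then c2 j * ?X j else 0)"
      by (simp only: sum_subtractf sum_distrib_left)
    also have "\<dots> = (\<Sum>j\<in>J1. c1 j * ?X j) - a * (\<Sum>j\<in>J2. c2 j * ?X j)"
      using sum.inter_restrict[of "J1 \<union> J2" "\<lambda>j. c1 j * ?X j" J1]
        sum.inter_restrict[of "J1 \<union> J2" "\<lambda>j. c2 j * ?X j" J2] J1(1) J2(1)
      by (simp add: Int_absorb1)
    finally show ?thesis
      using w1 w2 that by simp
  qed
  then show ?thesis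
    unfolding translate_span_def using J1 J2
    by (intro CollectI exI[of _ "J1 \<union> J2"] exI[of _ c]) simp
qed

lemma translate_span_step_back:
  assumes "w \<in> translate_span d r u" and "l < d"
  shows "(\<lambda>k. w (step_back l k)) \<in> translate_span d r u"
proof -
  obtain J c where J: "finite J" "J \<subseteq> Zd d"
    and w: "\<And>k i. k \<in> Zd d \<Longrightarrow> i < r \<Longrightarrow> w k i = (\<Sum>j\<in>J. c j * u (\<lambda>m. k m - j m) i)"
    using assms(1) unfolding translate_span_def by blast
  define step where "step j = j(l := j l + 1)" for j :: "nat \<Rightarrow> int"
  have back_step: "step_back l (step j) = j" for j
    by (simp add: step_back_def step_def fun_eq_iff)
  then have "inj_on step J"
    by (metis inj_onI)
  have "w (step_back l k) i = (\<Sum>j\<in>step ` J. c (step_back l j) * u (\<lambda>m. k m - j m) i)"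
    if "k \<in> Zd d" and "i < r" for k i
  proof -
    have shift: "(\<lambda>m. step_back l k m - j m) = (\<lambda>m. k m - step j m)" for j
      by (simp add: step_back_def step_def fun_eq_iff)
    have "w (step_back l k) i = (\<Sum>j\<in>J. c j * u (\<lambda>m. step_back l k m - j m) i)"
      using step_back_in_Zd[OF that(1) assms(2)] that(2) by (rule w)
    also have "\<dots> = (\<Sum>j\<in>J. c j * u (\<lambda>m. k m - step j m) i)"
      by (simp only: shift)
    also have "\<dots> = (\<Sum>j\<in>step ` J. c (step_back l j) * u (\<lambda>m. k m - j m) i)"
      by (simp add: sum.reindex[OF \<open>inj_on step J\<close>] back_step)
    finally show ?thesis .
  qed
  moreover have "step ` J \<subseteq> Zd d"
    using J(2) assms(2) by (auto simp: step_def Zd_def)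
  ultimately show ?thesis
    unfolding translate_span_def using J(1)
    by (intro CollectI exI[of _ "step ` J"] exI[of _ "\<lambda>j. c (step_back l j)"]) simp
qed

lemma gpow_step_back:
  assumes "l < d" and "\<omega> l \<noteq> 0"
  shows "gpow d \<omega> k = \<omega> l * gpow d \<omega> (step_back l k)"
proof -
  have "gpow d \<omega> k = \<omega> l powi k l * (\<Prod>i\<in>{..<d} - {l}. \<omega> i powi k i)"
    unfolding gpow_def using assms(1) by (intro prod.remove) simp_all
  moreover have "gpow d \<omega> (step_back l k) = \<omega> l powi (k l - 1) * (\<Prod>i\<in>{..<d} - {l}. \<omega> i powi k i)"
    unfolding gpow_def using assms(1) by (subst prod.remove[of _ l]) (simp_all add: step_back_def)
  moreover have "\<omega> l powi k l = \<omega> l * \<omega> l powi (k l - 1)"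
    using power_int_add_1'[of "\<omega> l" "k l - 1"] assms(2) by simp
  ultimately show ?thesis
    by (simp add: mult.assoc)
qed

lemma gpow_nonzero: "\<forall>i<d. \<omega> i \<noteq> 0 \<Longrightarrow> gpow d \<omega> k \<noteq> 0"
  by (simp add: gpow_def)

lemma pg_seq_fun_bdiff_in_translate_span:
  assumes "pg_seq_fun d r \<omega> F \<in> translate_span d r u" and "l < d" and "\<omega> l \<noteq> 0"
  shows "pg_seq_fun d r \<omega> (\<lambda>i. bdiff l (F i)) \<in> translate_span d r u"
proof (rule translate_span_cong)
  show "(\<lambda>k i. pg_seq_fun d r \<omega> F k i - \<omega> l * pg_seq_fun d r \<omega> F (step_back l k) i)
      \<in> translate_span d r u"
    using assms(1) translate_span_step_back[OF assms(1,2)] by (rule translate_span_diff)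
next
  fix k i
  show "pg_seq_fun d r \<omega> (\<lambda>i. bdiff l (F i)) k i
      = pg_seq_fun d r \<omega> F k i - \<omega> l * pg_seq_fun d r \<omega> F (step_back l k) i"
    using gpow_step_back[of l d \<omega> k, OF assms(2,3)]
    by (simp add: pg_seq_fun_def bdiff_def algebra_simps)
qed

lemma nonconstant_affine_in_translate_span:
  assumes "\<forall>i<d. \<omega> i \<noteq> 0" and "pg_seq_fun d r \<omega> F \<in> translate_span d r u"
    and "\<forall>i<r. diff_deg_le d n (F i)" and "\<exists>i<r. \<not> diff_deg_le d 0 (F i)"
  obtains G where "pg_seq_fun d r \<omega> G \<in> translate_span d r u"
    and "\<forall>i<r. diff_deg_le d 1 (G i)" and "\<exists>i<r. \<not> diff_deg_le d 0 (G i)"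
  using assms(2-4)
proof (induction n arbitrary: F)
  case 0
  then show ?case
    by blast
next
  case (Suc n)
  show ?case
  proof (cases "\<forall>i<r. diff_deg_le d 1 (F i)")
    case True
    with Suc.prems show ?thesis
      by blast
  next
    case False
    then obtain i l where "i < r" and "l < d" and "\<not> diff_deg_le d 0 (bdiff l (F i))"
      unfolding One_nat_def diff_deg_le.simps(2) by blast
    moreover have "pg_seq_fun d r \<omega> (\<lambda>i. bdiff l (F i)) \<in> translate_span d r u"
      using Suc.prems(2) \<open>l < d\<close> assms(1) by (intro pg_seq_fun_bdiff_in_translate_span) simp_all
    moreover have "\<forall>i<r. diff_deg_le d n (bdiff l (F i))"
      using Suc.prems(3) \<open>l < d\<close> by simp
    ultimately show ?thesis
      using Suc.IH Suc.prems(1) by blast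
  qed
qed

lemma pg_seq_affine_interpolant:
  assumes "\<forall>i<d. \<omega> i \<noteq> 0" and "pg_seq_fun d r \<omega> G \<in> translate_span d r u"
    and "\<forall>i<r. diff_deg_le d 1 (G i)" and "\<exists>i<r. \<not> diff_deg_le d 0 (G i)"
  defines "g \<equiv> \<lambda>i. affine_interpolant d (G i)"
  shows "\<forall>i<r. mpoly_vars_in d (g i) \<and> (\<forall>\<alpha>\<in>Poly_Mapping.keys (g i). tdeg \<alpha> \<le> 1)"
    and "\<exists>i<r. \<exists>\<alpha>\<in>Poly_Mapping.keys (g i). \<alpha> \<noteq> 0"
    and "\<exists>k\<in>Zd d. \<exists>i<r. pg_seq d r \<omega> g k i \<noteq> 0"
    and "pg_seq d r \<omega> g \<in> translate_span d r u"
proof -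
  have vars: "mpoly_vars_in d (g i)" for i
    unfolding g_def affine_interpolant_def by (rule affine_mpoly_vars_in)
  moreover have "tdeg \<alpha> \<le> 1" if "\<alpha> \<in> Poly_Mapping.keys (g i)" for i \<alpha>
    using that unfolding g_def affine_interpolant_def by (rule tdeg_le_1_if_in_keys_affine_mpoly)
  ultimately show "\<forall>i<r. mpoly_vars_in d (g i) \<and> (\<forall>\<alpha>\<in>Poly_Mapping.keys (g i). tdeg \<alpha> \<le> 1)"
    by blast
  have peval_g: "peval (g i) k = G i k" if "i < r" and "k \<in> Zd d" for i k
    unfolding g_def using assms(3) that by (blast intro: peval_affine_interpolant)
  obtain i where i: "i < r" "\<not> diff_deg_le d 0 (G i)"
    using assms(4) by blast
  have "\<not> diff_deg_le d 0 (peval (g i))"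
    using i(2) diff_deg_le_cong[of d "peval (g i)" "G i" 0] peval_g[OF i(1)] by blast
  then have "\<not> Poly_Mapping.keys (g i) \<subseteq> {0}"
    using diff_deg_le_0_peval_iff[OF vars] by blast
  with i(1) show "\<exists>i<r. \<exists>\<alpha>\<in>Poly_Mapping.keys (g i). \<alpha> \<noteq> 0"
    by blast
  obtain k where k: "k \<in> Zd d" "G i k \<noteq> 0"
  proof -
    obtain k k' where "k \<in> Zd d" "k' \<in> Zd d" "G i k \<noteq> G i k'"
      using i(2) unfolding diff_deg_le.simps by blast
    then show ?thesis
      using that by metis
  qed
  have "pg_seq d r \<omega> g k i = gpow d \<omega> k * G i k"
    using i(1) k(1) by (simp add: pg_seq_def peval_g)
  with k i(1) show "\<exists>k\<in>Zd d. \<exists>i<r. pg_seq d r \<omega> g k i \<noteq> 0"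
    using gpow_nonzero[OF assms(1), of k] by (intro bexI[of _ k] exI[of _ i]) simp_all
  show "pg_seq d r \<omega> g \<in> translate_span d r u"
    using assms(2) by (rule translate_span_cong) (simp add: pg_seq_def pg_seq_fun_def peval_g)
qed

theorem lemma5p1:
  fixes d r :: nat and \<omega> :: "nat \<Rightarrow> complex" and h :: "nat \<Rightarrow> mpoly"
  assumes "\<forall>i<d. \<omega> i \<noteq> 0"
    and "\<forall>i<r. mpoly_vars_in d (h i)"
    and "\<exists>k\<in>Zd d. \<exists>i<r. pg_seq d r \<omega> h k i \<noteq> 0"
    and "\<exists>i<r. h i \<noteq> 0 \<and> tdeg (multideg (h i)) \<ge> 2"
  shows "\<exists>g :: nat \<Rightarrow> mpoly.
           (\<forall>i<r. mpoly_vars_in d (g i) \<and> (\<forall>\<alpha>\<in>Poly_Mapping.keys (g i). tdeg \<alpha> \<le> 1))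
         \<and> (\<exists>i<r. \<exists>\<alpha>\<in>Poly_Mapping.keys (g i). \<alpha> \<noteq> 0)
         \<and> (\<exists>k\<in>Zd d. \<exists>i<r. pg_seq d r \<omega> g k i \<noteq> 0)
         \<and> pg_seq d r \<omega> g \<in> translate_span d r (pg_seq d r \<omega> h)"
proof -
  define F where "F = (\<lambda>i. peval (h i))"
  define N where "N = (\<Sum>i<r. \<Sum>\<alpha>\<in>Poly_Mapping.keys (h i). tdeg \<alpha>)"
  have span: "pg_seq_fun d r \<omega> F \<in> translate_span d r (pg_seq d r \<omega> h)"
    using translate_span_self by (simp add: F_def pg_seq_eq_pg_seq_fun)
  have "\<forall>i<r. diff_deg_le d N (F i)"
    unfolding F_def N_def by (auto intro: diff_deg_le_mono[OF _ diff_deg_le_peval] member_le_sum)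
  moreover obtain i where i: "i < r" "h i \<noteq> 0" "2 \<le> tdeg (multideg (h i))"
    using assms(4) by blast
  then have "multideg (h i) \<noteq> 0"
    by (auto simp: tdeg_def)
  then have "\<exists>i<r. \<not> diff_deg_le d 0 (F i)"
    unfolding F_def using peval_nonconstant_if_multideg_neq_0 assms(2) i(1,2) by blast
  ultimately obtain G where "pg_seq_fun d r \<omega> G \<in> translate_span d r (pg_seq d r \<omega> h)"
    and "\<forall>i<r. diff_deg_le d 1 (G i)" and "\<exists>i<r. \<not> diff_deg_le d 0 (G i)"
    using nonconstant_affine_in_translate_span[OF assms(1) span] by blast
  from pg_seq_affine_interpolant[OF assms(1) this] show ?thesis
    by (intro exI[of _ "\<lambda>i. affine_interpolant d (G i)"]) blast

qed

end
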